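(* For every $n\ge1$, $$\hat B_{n+1}(x)=(n+1+x+nx^2)\,\hat B_n(x)+(1-x)(1+x^2)\,\hat B_n'(x).$$
   Context: $\mathcal B_n$ is the set of signed permutations (bijections $\sigma$ of $\{\pm1,\dots,\pm n\}$ with $\sigma(-i)=-\sigma(i)$), written as words $\sigma(1)\cdots\sigma(n)$ with $\sigma(0)=0$. An index $i\in\{0\}\cup[n-1]$ is an alternating descent of $\sigma$ if either $\sigma(i)<\sigma(i+1)$ and $i$ is even, or $\sigma(i)>\sigma(i+1)$ and $i$ is odd; $\hat B_n(x)=\sum_{\sigma\in\mathcal B_n}x^{\hat d_B(\sigma)}$ with $\hat d_B(\sigma)$ the number of alternating descents. *)

theory Defs
  imports "HOL-Computational_Algebra.Polynomial"
begin

text \<open>A signed permutation of [n] is encoded by its word sigma(1)..sigma(n) as a function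
  nat => int with sigma 0 = 0, sigma i = 0 for i > n (extensionality), and
  i |-> |sigma i| a bijection of {1..n}. The value at -i is then forced to be -sigma(i).\<close>

definition signed_perms :: "nat \<Rightarrow> (nat \<Rightarrow> int) set" where
  "signed_perms n = {\<sigma>. \<sigma> 0 = 0 \<and> (\<forall>i>n. \<sigma> i = 0) \<and>
      bij_betw (\<lambda>i. nat \<bar>\<sigma> i\<bar>) {1..n} {1..n}}"

definition alt_descent :: "(nat \<Rightarrow> int) \<Rightarrow> nat \<Rightarrow> bool" where
  "alt_descent \<sigma> i \<longleftrightarrow> (even i \<and> \<sigma> i < \<sigma> (i+1)) \<or> (odd i \<and> \<sigma> i > \<sigma> (i+1))"

definition alt_des_B :: "nat \<Rightarrow> (nat \<Rightarrow> int) \<Rightarrow> nat" where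
  "alt_des_B n \<sigma> = card {i \<in> {0..<n}. alt_descent \<sigma> i}"

definition Bhat :: "nat \<Rightarrow> int poly" where
  "Bhat n = (\<Sum>\<sigma>\<in>signed_perms n. monom 1 (alt_des_B n \<sigma>))"

end

theory Submission
  imports Defs
begin

text \<open>Every signed permutation of \<open>[n+1]\<close> arises in exactly one way from a signed permutation
  of \<open>[n]\<close> by inserting \<open>\<pm>(n+1)\<close> right after position \<open>j \<in> {0..n}\<close> and negating all later
  entries. The negation compensates the shift of parity, so the tail keeps its alternating
  descents; the comparison at \<open>j\<close> is replaced by two new ones, which for one sign are both
  alternating descents and for the other sign neither. If \<open>\<sigma>\<close> has \<open>d\<close> alternating descents,
  inserting at \<open>j < n\<close> therefore contributes \<open>x\<^sup>d\<^sup>-\<^sup>1(1+x\<^sup>2)\<close> or \<open>x\<^sup>d(1+x\<^sup>2)\<close> according as \<open>j\<close>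
  is an alternating descent of \<open>\<sigma>\<close>, and inserting at the end contributes \<open>x\<^sup>d(1+x)\<close>. The total
  \<open>(d x\<^sup>d\<^sup>-\<^sup>1 + (n-d) x\<^sup>d)(1+x\<^sup>2) + x\<^sup>d(1+x)\<close> is the right-hand side of the recurrence at \<open>x\<^sup>d\<close>,
  and both sides are linear in \<open>B\<^sub>n\<close>.\<close>

lemma signed_perms_zero: "\<sigma> \<in> signed_perms n \<Longrightarrow> \<sigma> 0 = 0"
  by (simp add: signed_perms_def)

lemma signed_perms_vanish: "\<sigma> \<in> signed_perms n \<Longrightarrow> n < i \<Longrightarrow> \<sigma> i = 0"
  by (simp add: signed_perms_def)

lemma signed_perms_abs_bij:
  "\<sigma> \<in> signed_perms n \<Longrightarrow> bij_betw (\<lambda>i. nat \<bar>\<sigma> i\<bar>) {1..n} {1..n}"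
  by (simp add: signed_perms_def)

lemma signed_perms_abs_image:
  "\<sigma> \<in> signed_perms n \<Longrightarrow> (\<lambda>i. nat \<bar>\<sigma> i\<bar>) ` {1..n} = {1..n}"
  using signed_perms_abs_bij bij_betw_imp_surj_on by blast

lemma signed_perms_abs_in:
  "\<sigma> \<in> signed_perms n \<Longrightarrow> i \<in> {1..n} \<Longrightarrow> nat \<bar>\<sigma> i\<bar> \<in> {1..n}"
  using signed_perms_abs_image by blast

lemma signed_perms_abs_le:
  assumes "\<sigma> \<in> signed_perms n"
  shows "\<bar>\<sigma> i\<bar> \<le> int n"
proof (cases "i \<in> {1..n}")
  case True
  then show ?thesis using signed_perms_abs_in[OF assms True] by simp linarith
next
  case False
  then have "i = 0 \<or> n < i" by auto
  then have "\<sigma> i = 0" using signed_perms_zero[OF assms] signed_perms_vanish[OF assms] by blast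
  then show ?thesis by simp
qed

lemma signed_perms_abs_inj:
  assumes "\<sigma> \<in> signed_perms n" "i \<in> {1..n}" "k \<in> {1..n}" "\<bar>\<sigma> i\<bar> = \<bar>\<sigma> k\<bar>"
  shows "i = k"
proof -
  have "nat \<bar>\<sigma> i\<bar> = nat \<bar>\<sigma> k\<bar>"
    using assms(4) by simp
  with bij_betw_imp_inj_on[OF signed_perms_abs_bij[OF assms(1)]] show ?thesis
    using assms(2,3) by (rule inj_onD)
qed

lemma signed_permsI:
  assumes "\<sigma> 0 = 0" "\<And>i. n < i \<Longrightarrow> \<sigma> i = 0" "(\<lambda>i. nat \<bar>\<sigma> i\<bar>) ` {1..n} = {1..n}"
  shows "\<sigma> \<in> signed_perms n"
proof -
  have "inj_on (\<lambda>i. nat \<bar>\<sigma> i\<bar>) {1..n}"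
    using assms(3) by (intro finite_surj_inj) simp_all
  then show ?thesis
    using assms unfolding signed_perms_def bij_betw_def by blast
qed

definition insert_largest :: "nat \<Rightarrow> (nat \<Rightarrow> int) \<Rightarrow> nat \<Rightarrow> int \<Rightarrow> nat \<Rightarrow> int" where
  "insert_largest n \<sigma> j e =
     (\<lambda>k. if k \<le> j then \<sigma> k else if k = j + 1 then e * int (n + 1) else - \<sigma> (k - 1))"

lemma insert_largest_in_signed_perms:
  assumes \<sigma>: "\<sigma> \<in> signed_perms n" and j: "j \<le> n" and e: "e \<in> {1, -1}"
  shows "insert_largest n \<sigma> j e \<in> signed_perms (n + 1)"
proof (rule signed_permsI)
  let ?\<tau> = "insert_largest n \<sigma> j e"
  show "?\<tau> 0 = 0"
    using signed_perms_zero[OF \<sigma>] by (simp add: insert_largest_def)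
  show "?\<tau> i = 0" if "n + 1 < i" for i
    using that j signed_perms_vanish[OF \<sigma>, of "i - 1"] by (simp add: insert_largest_def)
  have abs_e: "\<bar>e\<bar> = 1"
    using e by auto
  show "(\<lambda>i. nat \<bar>?\<tau> i\<bar>) ` {1..n + 1} = {1..n + 1}"
  proof (intro equalityI subsetI)
    fix m assume "m \<in> (\<lambda>i. nat \<bar>?\<tau> i\<bar>) ` {1..n + 1}"
    then obtain i where i: "i \<in> {1..n + 1}" "m = nat \<bar>?\<tau> i\<bar>" by blast
    consider "i \<le> j" | "i = j + 1" | "j + 1 < i" by linarith
    then show "m \<in> {1..n + 1}"
    proof cases
      case 1
      then have "i \<in> {1..n}" "m = nat \<bar>\<sigma> i\<bar>"
        using i j by (auto simp: insert_largest_def)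
      then have "m \<in> {1..n}" using signed_perms_abs_in[OF \<sigma>] by blast
      then show ?thesis by simp
    next
      case 2
      then have "m = n + 1" using i abs_e by (simp add: insert_largest_def abs_mult nat_int_add)
      then show ?thesis by simp
    next
      case 3
      then have "i - 1 \<in> {1..n}" "m = nat \<bar>\<sigma> (i - 1)\<bar>"
        using i by (auto simp: insert_largest_def)
      then have "m \<in> {1..n}" using signed_perms_abs_in[OF \<sigma>] by blast
      then show ?thesis by simp
    qed
  next
    fix m assume m: "m \<in> {1..n + 1}"
    show "m \<in> (\<lambda>i. nat \<bar>?\<tau> i\<bar>) ` {1..n + 1}"
    proof (cases "m = n + 1")
      case True
      then have "m = nat \<bar>?\<tau> (j + 1)\<bar>"
        using abs_e by (simp add: insert_largest_def abs_mult nat_int_add)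
      moreover have "j + 1 \<in> {1..n + 1}" using j by simp
      ultimately show ?thesis by blast
    next
      case False
      then have "m \<in> (\<lambda>i. nat \<bar>\<sigma> i\<bar>) ` {1..n}"
        using m signed_perms_abs_image[OF \<sigma>] by auto
      then obtain k where k: "k \<in> {1..n}" "m = nat \<bar>\<sigma> k\<bar>" by blast
      define i where "i = (if k \<le> j then k else k + 1)"
      have "m = nat \<bar>?\<tau> i\<bar>" "i \<in> {1..n + 1}"
        using k by (auto simp: i_def insert_largest_def)
      then show ?thesis by blast
    qed
  qed
qed

lemma insert_largest_inj:
  assumes \<sigma>: "\<sigma> \<in> signed_perms n" and \<sigma>': "\<sigma>' \<in> signed_perms n"
    and e: "e \<in> {1, -1}" and e': "e' \<in> {1, -1}"
    and eq: "insert_largest n \<sigma> j e = insert_largest n \<sigma>' j' e'"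
  shows "\<sigma> = \<sigma>' \<and> j = j' \<and> e = e'"
proof -
  have at: "insert_largest n \<sigma> j e k = insert_largest n \<sigma>' j' e' k" for k
    using eq by simp
  have no_collision: False if "\<rho> \<in> signed_perms n" "e\<^sub>0 \<in> {1, -1}" "e\<^sub>0 * int (n + 1) = \<rho> i"
    for \<rho> e\<^sub>0 i
    using that signed_perms_abs_le[of \<rho> n i] by (auto simp: abs_mult)
  have "j = j'"
  proof (rule linorder_cases[of j j'])
    assume "j < j'"
    then have "e * int (n + 1) = \<sigma>' (j + 1)"
      using at[of "j + 1"] by (simp add: insert_largest_def)
    then show ?thesis using no_collision[OF \<sigma>' e] by blast
  next
    assume "j' < j"
    then have "e' * int (n + 1) = \<sigma> (j' + 1)"
      using at[of "j' + 1"] by (simp add: insert_largest_def)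
    then show ?thesis using no_collision[OF \<sigma> e'] by blast
  qed
  moreover have "e = e'"
    using at[of "j + 1"] \<open>j = j'\<close> by (simp add: insert_largest_def)
  moreover have "\<sigma> k = \<sigma>' k" for k
    using at[of k] at[of "k + 1"] \<open>j = j'\<close> by (cases "k \<le> j") (simp_all add: insert_largest_def)
  ultimately show ?thesis by auto
qed

lemma insert_largest_surj:
  assumes \<tau>: "\<tau> \<in> signed_perms (n + 1)"
  obtains \<sigma> j e where "\<sigma> \<in> signed_perms n" "j \<le> n" "e \<in> {1, -1}" "\<tau> = insert_largest n \<sigma> j e"
proof -
  have "n + 1 \<in> (\<lambda>i. nat \<bar>\<tau> i\<bar>) ` {1..n + 1}"
    using signed_perms_abs_image[OF \<tau>] by simp
  then obtain k where k: "k \<in> {1..n + 1}" "n + 1 = nat \<bar>\<tau> k\<bar>" by blast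
  define j where "j = k - 1"
  define e :: int where "e = sgn (\<tau> k)"
  define \<sigma> where "\<sigma> = (\<lambda>i. if i \<le> j then \<tau> i else if i \<le> n then - \<tau> (i + 1) else 0)"
  have kj: "k = j + 1" and j: "j \<le> n"
    using k by (auto simp: j_def)
  have "\<bar>\<tau> k\<bar> = int n + 1"
    using k by linarith
  then have \<tau>k: "\<tau> k = e * int (n + 1)" and e: "e \<in> {1, -1}"
    by (auto simp: e_def sgn_if abs_if split: if_splits)
  have other: "nat \<bar>\<tau> i\<bar> \<in> {1..n}" if "i \<in> {1..n + 1}" "i \<noteq> k" for i
  proof -
    have "nat \<bar>\<tau> i\<bar> \<noteq> nat \<bar>\<tau> k\<bar>"
      using signed_perms_abs_inj[OF \<tau> that(1) k(1)] that(2) by (auto simp: eq_nat_nat_iff)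
    then show ?thesis
      using signed_perms_abs_in[OF \<tau> that(1)] k(2) by auto
  qed
  have "\<sigma> \<in> signed_perms n"
  proof (rule signed_permsI)
    show "\<sigma> 0 = 0" using signed_perms_zero[OF \<tau>] by (simp add: \<sigma>_def)
    show "\<sigma> i = 0" if "n < i" for i using that j by (simp add: \<sigma>_def)
    show "(\<lambda>i. nat \<bar>\<sigma> i\<bar>) ` {1..n} = {1..n}"
    proof (intro equalityI subsetI)
      fix m assume "m \<in> (\<lambda>i. nat \<bar>\<sigma> i\<bar>) ` {1..n}"
      then obtain i where i: "i \<in> {1..n}" "m = nat \<bar>\<sigma> i\<bar>" by blast
      then show "m \<in> {1..n}"
        using other[of i] other[of "i + 1"] kj by (cases "i \<le> j") (auto simp: \<sigma>_def)
    next
      fix m assume m: "m \<in> {1..n}"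
      then have "m \<in> (\<lambda>i. nat \<bar>\<tau> i\<bar>) ` {1..n + 1}"
        using signed_perms_abs_image[OF \<tau>] by auto
      then obtain i where i: "i \<in> {1..n + 1}" "m = nat \<bar>\<tau> i\<bar>" by blast
      with m k have "i \<noteq> k" by auto
      define i' where "i' = (if i \<le> j then i else i - 1)"
      have "i' \<in> {1..n}" "m = nat \<bar>\<sigma> i'\<bar>"
        using i \<open>i \<noteq> k\<close> kj j by (auto simp: i'_def \<sigma>_def)
      then show "m \<in> (\<lambda>i. nat \<bar>\<sigma> i\<bar>) ` {1..n}" by blast
    qed
  qed
  moreover have "\<tau> = insert_largest n \<sigma> j e"
  proof
    fix i
    consider "i \<le> j" | "i = j + 1" | "j + 1 < i" "i \<le> n + 1" | "n + 1 < i" by linarith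
    then show "\<tau> i = insert_largest n \<sigma> j e i"
    proof cases
      case 1
      then show ?thesis by (simp add: insert_largest_def \<sigma>_def)
    next
      case 2
      then show ?thesis using kj \<tau>k by (simp add: insert_largest_def)
    next
      case 3
      then have "i - 1 + 1 = i" "\<not> i - 1 \<le> j" "i - 1 \<le> n" "i \<noteq> j + 1" by simp_all
      with 3 show ?thesis by (simp add: insert_largest_def \<sigma>_def)
    next
      case 4
      then show ?thesis using j signed_perms_vanish[OF \<tau>, of i] by (simp add: insert_largest_def \<sigma>_def)
    qed
  qed
  ultimately show ?thesis using that j e by blast
qed

lemma bij_betw_insert_largest:
  "bij_betw (\<lambda>(\<sigma>, j, e). insert_largest n \<sigma> j e)
     (signed_perms n \<times> {0..n} \<times> {1, -1 :: int}) (signed_perms (n + 1))"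
proof (rule bij_betwI')
  let ?h = "\<lambda>(\<sigma>, j, e). insert_largest n \<sigma> j e" and ?D = "signed_perms n \<times> {0..n} \<times> {1, -1 :: int}"
  fix x y assume "x \<in> ?D" "y \<in> ?D"
  moreover obtain \<sigma> j e \<sigma>' j' e' where "x = (\<sigma>, j, e)" "y = (\<sigma>', j', e')"
    by (cases x, cases y) auto
  ultimately show "(?h x = ?h y) = (x = y)"
    using insert_largest_inj[of \<sigma> n \<sigma>' e e' j j'] by auto
next
  show "(\<lambda>(\<sigma>, j, e). insert_largest n \<sigma> j e) x \<in> signed_perms (n + 1)"
    if "x \<in> signed_perms n \<times> {0..n} \<times> {1, -1 :: int}" for x
    using that insert_largest_in_signed_perms by auto
next
  fix \<tau> assume "\<tau> \<in> signed_perms (n + 1)"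
  then show "\<exists>x \<in> signed_perms n \<times> {0..n} \<times> {1, -1 :: int}. \<tau> = (\<lambda>(\<sigma>, j, e). insert_largest n \<sigma> j e) x"
    by (rule insert_largest_surj) force
qed

lemma alt_des_B_eq_sum: "alt_des_B n \<sigma> = (\<Sum>i<n. of_bool (alt_descent \<sigma> i))"
proof -
  have "alt_des_B n \<sigma> = (\<Sum>i\<in>{i \<in> {..<n}. alt_descent \<sigma> i}. 1)"
    by (simp add: alt_des_B_def atLeast0LessThan)
  also have "\<dots> = (\<Sum>i<n. of_bool (alt_descent \<sigma> i))"
    by (subst sum.inter_filter) (simp_all add: of_bool_def)
  finally show ?thesis .
qed

lemma sum_lessThan_replace_by_two:
  fixes a b :: "nat \<Rightarrow> 'a::comm_monoid_add"
  assumes "j < n" and below: "\<And>i. i < j \<Longrightarrow> b i = a i"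
    and above: "\<And>i. j < i \<Longrightarrow> i < n \<Longrightarrow> b (i + 1) = a i"
  shows "(\<Sum>i<n + 1. b i) + a j = (\<Sum>i<n. a i) + b j + b (j + 1)"
  using assms(1) above
proof (induction n)
  case (Suc n)
  show ?case
  proof (cases "j = n")
    case True
    have "(\<Sum>i<j. b i) = (\<Sum>i<j. a i)"
      using below by simp
    then show ?thesis using True by (simp add: ac_simps)
  next
    case False
    have "(\<Sum>i<Suc n + 1. b i) + a j = ((\<Sum>i<n + 1. b i) + a j) + b (n + 1)"
      by (simp add: ac_simps)
    also have "\<dots> = ((\<Sum>i<n. a i) + b j + b (j + 1)) + a n"
      using Suc False by simp
    also have "\<dots> = (\<Sum>i<Suc n. a i) + b j + b (j + 1)"
      by (simp add: ac_simps)
    finally show ?thesis .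
  qed
qed simp

lemma alt_descent_insert_largest_below:
  "i < j \<Longrightarrow> alt_descent (insert_largest n \<sigma> j e) i = alt_descent \<sigma> i"
  by (simp add: alt_descent_def insert_largest_def)

lemma alt_descent_insert_largest_above:
  "j < i \<Longrightarrow> alt_descent (insert_largest n \<sigma> j e) (Suc i) = alt_descent \<sigma> i"
  by (auto simp: alt_descent_def insert_largest_def)

lemma alt_descent_insert_largest_around:
  assumes "\<sigma> \<in> signed_perms n" "e \<in> {1, -1}"
  shows "alt_descent (insert_largest n \<sigma> j e) j = ((e = 1) = even j)"
    and "alt_descent (insert_largest n \<sigma> j e) (j + 1) = ((e = 1) = even j)"
  using assms signed_perms_abs_le[OF assms(1), of j] signed_perms_abs_le[OF assms(1), of "j + 1"]
  by (auto simp: alt_descent_def insert_largest_def abs_le_iff)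

lemma alt_des_B_insert_largest:
  assumes "\<sigma> \<in> signed_perms n" "j < n" "e \<in> {1, -1}"
  shows "alt_des_B (n + 1) (insert_largest n \<sigma> j e) + of_bool (alt_descent \<sigma> j)
    = alt_des_B n \<sigma> + 2 * of_bool ((e = 1) = even j)"
proof -
  have "(\<Sum>i<n + 1. of_bool (alt_descent (insert_largest n \<sigma> j e) i)) + of_bool (alt_descent \<sigma> j)
      = (\<Sum>i<n. of_bool (alt_descent \<sigma> i)) + of_bool (alt_descent (insert_largest n \<sigma> j e) j)
        + (of_bool (alt_descent (insert_largest n \<sigma> j e) (j + 1)) :: nat)"
    by (rule sum_lessThan_replace_by_two)
      (simp_all add: \<open>j < n\<close> alt_descent_insert_largest_below alt_descent_insert_largest_above)
  then show ?thesis
    unfolding alt_des_B_eq_sum alt_descent_insert_largest_around[OF assms(1,3)] by simp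
qed

lemma alt_des_B_insert_largest_last:
  assumes "\<sigma> \<in> signed_perms n" "e \<in> {1, -1}"
  shows "alt_des_B (n + 1) (insert_largest n \<sigma> n e) = alt_des_B n \<sigma> + of_bool ((e = 1) = even n)"
  unfolding alt_des_B_eq_sum
  using alt_descent_insert_largest_below[of _ n n \<sigma> e] alt_descent_insert_largest_around(1)[OF assms]
  by simp

lemma alt_des_B_le: "alt_des_B n \<sigma> \<le> n"
proof -
  have "alt_des_B n \<sigma> \<le> card {0..<n}"
    unfolding alt_des_B_def by (rule card_mono) auto
  then show ?thesis by simp
qed

lemma alt_descent_le_alt_des_B: "j < n \<Longrightarrow> of_bool (alt_descent \<sigma> j) \<le> alt_des_B n \<sigma>"
  unfolding alt_des_B_eq_sum by (rule member_le_sum) simp_all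

lemma monom_x_pderiv:
  "[:0, 1:] * pderiv (monom (1::'a::{comm_semiring_1,semiring_no_zero_divisors}) d) = of_nat d * monom 1 d"
proof (cases d)
  case (Suc k)
  have "[:0, 1:] * monom (of_nat d :: 'a) k = monom (of_nat d) d"
    using Suc by (simp add: monom_Suc)
  then show ?thesis
    using Suc by (simp add: pderiv_monom of_nat_poly smult_monom)
qed simp

lemma pderiv_sum: "pderiv (\<Sum>x\<in>A. f x) = (\<Sum>x\<in>A. pderiv (f x))"
  using higher_pderiv_sum[of 1] by simp

lemma recurrence_operator_monom:
  assumes "d \<le> n"
  shows "[:of_nat n + 1, 1, of_nat n:] * monom 1 d + ([:1, -1:] * [:1, 0, 1:]) * pderiv (monom 1 d)
    = (pderiv (monom 1 d) + of_nat (n - d) * monom 1 d) * [:1, 0, 1:] + monom (1::int) d * [:1, 1:]"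
proof -
  have coeffs: "[:of_nat n + 1, 1, of_nat n:] = of_nat n * [:1, 0, 1:] + [:1, 1::int:]"
    by (simp add: of_nat_poly)
  have factor: "[:1, -1:] * [:1, 0, 1:] = [:1, 0, 1:] - [:0, 1:] * [:1, 0, 1::int:]"
    by simp
  have diff: "(of_nat (n - d) :: int poly) = of_nat n - of_nat d"
    using assms by simp
  have ring_identity: "(nn * Q + L) * m + (Q - X * Q) * p = (p + (nn - dd) * m) * Q + m * L"
    if "X * p = dd * m" for nn Q L m X p dd :: "int poly"
  proof -
    have "(Q - X * Q) * p = Q * p - Q * (X * p)" by (simp add: algebra_simps)
    then show ?thesis using that by (simp add: algebra_simps)
  qed
  show ?thesis
    unfolding coeffs factor diff by (rule ring_identity[OF monom_x_pderiv])
qed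

lemma sum_sign_choice_monom:
  "(\<Sum>e\<in>{1, -1 :: int}. monom 1 (c + k * of_bool ((e = 1) = b)))
    = monom 1 c + monom (1 :: 'a::comm_semiring_1) (c + k)"
  by (cases b) (simp_all add: add.commute)

lemma monom_add_monom_shift:
  "monom (1 :: 'a::comm_semiring_1) c + monom 1 (c + k) = monom 1 c * (1 + monom 1 k)"
  by (simp add: distrib_left mult_monom)

lemma sum_signs_insert_largest:
  assumes "\<sigma> \<in> signed_perms n" "j < n"
  shows "(\<Sum>e\<in>{1, -1}. monom 1 (alt_des_B (n + 1) (insert_largest n \<sigma> j e)))
    = monom 1 (alt_des_B n \<sigma> - of_bool (alt_descent \<sigma> j)) * [:1, 0, 1 :: int:]"
proof -
  let ?c = "alt_des_B n \<sigma> - of_bool (alt_descent \<sigma> j)"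
  have "alt_des_B (n + 1) (insert_largest n \<sigma> j e) = ?c + 2 * of_bool ((e = 1) = even j)"
    if "e \<in> {1, -1}" for e
    using alt_des_B_insert_largest[OF assms that] alt_descent_le_alt_des_B[OF assms(2), of \<sigma>] by linarith
  then have "(\<Sum>e\<in>{1, -1}. monom 1 (alt_des_B (n + 1) (insert_largest n \<sigma> j e)))
      = (\<Sum>e\<in>{1, -1 :: int}. monom 1 (?c + 2 * of_bool ((e = 1) = even j)))"
    by (intro sum.cong) simp_all
  also have "\<dots> = monom 1 ?c * (1 + monom 1 2)"
    by (simp only: sum_sign_choice_monom monom_add_monom_shift)
  also have "1 + monom 1 2 = [:1, 0, 1 :: int:]"
    by (simp add: monom_altdef power2_eq_square one_pCons)
  finally show ?thesis .
qed

lemma sum_signs_insert_largest_last: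
  assumes "\<sigma> \<in> signed_perms n"
  shows "(\<Sum>e\<in>{1, -1}. monom 1 (alt_des_B (n + 1) (insert_largest n \<sigma> n e)))
    = monom 1 (alt_des_B n \<sigma>) * [:1, 1 :: int:]"
proof -
  have "(\<Sum>e\<in>{1, -1}. monom 1 (alt_des_B (n + 1) (insert_largest n \<sigma> n e)))
      = (\<Sum>e\<in>{1, -1 :: int}. monom 1 (alt_des_B n \<sigma> + 1 * of_bool ((e = 1) = even n)))"
    using alt_des_B_insert_largest_last[OF assms] by (intro sum.cong) simp_all
  also have "\<dots> = monom 1 (alt_des_B n \<sigma>) * (1 + monom 1 1)"
    by (simp only: sum_sign_choice_monom monom_add_monom_shift)
  also have "1 + monom 1 1 = [:1, 1 :: int:]"
    by (simp add: monom_altdef one_pCons)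
  finally show ?thesis .
qed

lemma sum_monom_drop_descent:
  "(\<Sum>j<n. monom (1::int) (alt_des_B n \<sigma> - of_bool (alt_descent \<sigma> j)))
    = pderiv (monom 1 (alt_des_B n \<sigma>)) + of_nat (n - alt_des_B n \<sigma>) * monom 1 (alt_des_B n \<sigma>)"
proof -
  define d where "d = alt_des_B n \<sigma>"
  define D where "D = {j \<in> {..<n}. alt_descent \<sigma> j}"
  have D: "D \<subseteq> {..<n}" "finite D" "card D = d"
    by (auto simp: D_def d_def alt_des_B_def atLeast0LessThan)
  have "(\<Sum>j<n. monom (1::int) (d - of_bool (alt_descent \<sigma> j)))
      = (\<Sum>j\<in>{..<n} - D. monom 1 d) + (\<Sum>j\<in>D. monom 1 (d - 1))"
    by (subst sum.subset_diff[OF D(1)]) (auto simp: D_def intro!: sum.cong)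
  also have "\<dots> = of_nat (n - d) * monom 1 d + of_nat d * monom 1 (d - 1)"
    using D by (simp add: card_Diff_subset)
  also have "of_nat d * monom 1 (d - 1) = pderiv (monom (1::int) d)"
    by (simp add: pderiv_monom of_nat_poly smult_monom)
  finally show ?thesis
    by (simp add: d_def add.commute)
qed

lemma sum_insert_largest_monom:
  assumes "\<sigma> \<in> signed_perms n"
  shows "(\<Sum>(j, e)\<in>{0..n} \<times> {1, -1}. monom (1::int) (alt_des_B (n + 1) (insert_largest n \<sigma> j e)))
    = [:of_nat n + 1, 1, of_nat n:] * monom 1 (alt_des_B n \<sigma>)
      + ([:1, -1:] * [:1, 0, 1:]) * pderiv (monom 1 (alt_des_B n \<sigma>))"
proof -
  let ?m = "monom (1::int) (alt_des_B n \<sigma>)"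
  have "(\<Sum>(j, e)\<in>{0..n} \<times> {1, -1}. monom 1 (alt_des_B (n + 1) (insert_largest n \<sigma> j e)))
      = (\<Sum>j<n. \<Sum>e\<in>{1, -1}. monom 1 (alt_des_B (n + 1) (insert_largest n \<sigma> j e)))
        + (\<Sum>e\<in>{1, -1}. monom 1 (alt_des_B (n + 1) (insert_largest n \<sigma> n e)))"
    by (simp add: sum.cartesian_product' atLeast0AtMost flip: lessThan_Suc_atMost)
  also have "\<dots> = (\<Sum>j<n. monom 1 (alt_des_B n \<sigma> - of_bool (alt_descent \<sigma> j)) * [:1, 0, 1:])
      + ?m * [:1, 1:]"
    using sum_signs_insert_largest[OF assms] sum_signs_insert_largest_last[OF assms] by simp
  also have "\<dots> = (\<Sum>j<n. monom 1 (alt_des_B n \<sigma> - of_bool (alt_descent \<sigma> j))) * [:1, 0, 1:]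
      + ?m * [:1, 1:]"
    by (simp only: sum_distrib_right)
  also have "\<dots> = (pderiv ?m + of_nat (n - alt_des_B n \<sigma>) * ?m) * [:1, 0, 1:] + ?m * [:1, 1:]"
    by (simp only: sum_monom_drop_descent)
  also have "\<dots> = [:of_nat n + 1, 1, of_nat n:] * ?m + ([:1, -1:] * [:1, 0, 1:]) * pderiv ?m"
    by (rule recurrence_operator_monom[OF alt_des_B_le, symmetric])
  finally show ?thesis .
qed

theorem mainTheorem10:
  fixes n :: nat
  assumes "n \<ge> 1"
  shows "Bhat (n + 1) = [:of_nat n + 1, 1, of_nat n:] * Bhat n
           + ([:1, -1:] * [:1, 0, 1:]) * pderiv (Bhat n)"
  \<comment> \<open>The recurrence holds for \<open>n = 0\<close> as well.\<close>
proof -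
  have "Bhat (n + 1) = (\<Sum>x\<in>signed_perms n \<times> {0..n} \<times> {1, -1}.
      monom 1 (alt_des_B (n + 1) ((\<lambda>(\<sigma>, j, e). insert_largest n \<sigma> j e) x)))"
    unfolding Bhat_def by (rule sum.reindex_bij_betw[OF bij_betw_insert_largest, symmetric])
  also have "\<dots> = (\<Sum>\<sigma>\<in>signed_perms n. \<Sum>(j, e)\<in>{0..n} \<times> {1, -1}.
      monom 1 (alt_des_B (n + 1) (insert_largest n \<sigma> j e)))"
    by (simp only: sum.cartesian_product' case_prod_unfold fst_conv snd_conv)
  also have "\<dots> = (\<Sum>\<sigma>\<in>signed_perms n. [:of_nat n + 1, 1, of_nat n:] * monom 1 (alt_des_B n \<sigma>)
      + ([:1, -1:] * [:1, 0, 1:]) * pderiv (monom 1 (alt_des_B n \<sigma>)))"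
    by (intro sum.cong refl sum_insert_largest_monom)
  also have "\<dots> = [:of_nat n + 1, 1, of_nat n:] * Bhat n + ([:1, -1:] * [:1, 0, 1:]) * pderiv (Bhat n)"
    by (simp add: Bhat_def sum.distrib sum_distrib_left pderiv_sum)
  finally show ?thesis .
qed

end
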